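(* Let $f,g\in\mathbb B(X)$ with $f$ modular in $g$, let $\mathbf u$ be an assignment over $X$ and $x\in\mathrm{dep}(g)$. Then $$\mathrm{mscs}^{\mathbf u}_x(f)=\mathrm{mscs}^{\mathbf u}_x(g)+\mathrm{mscs}^{\mathbf u}_g(f).$$
   Context: $X$ is a fixed finite set of variables; $\mathbb B(X)$ is the set of Boolean functions $\{0,1\}^X\to\{0,1\}$. For $\mathbf u\in\{0,1\}^X$ and $S\subseteq X$, $\mathbf u^{\oplus S}$ flips the values of the variables in $S$. $f_{x/c}$ is $f$ with $x$ fixed to $c$; $\mathrm{dep}(f)=\{x:f_{x/1}\ne f_{x/0}\}$; $f[x/s]=sf_{x/1}\lor\overline sf_{x/0}$; $\mathrm D_xf=f_{x/1}\oplus f_{x/0}$. Modularity: $f$ is modular in $g$ if $g$ is not constant and there are $\ell\in\mathbb B(X)$, $z\in X$ with $\mathrm{dep}(\ell)\cap\mathrm{dep}(g)=\emptyset$ and $f=\ell[z/g]$; then $f_{g/1}:=\ell_{z/1}$, $f_{g/0}:=\ell_{z/0}$ (well defined) and $\mathrm D_gf:=f_{g/1}\oplus f_{g/0}$. $\mathrm{mscs}^{\mathbf u}_x(f)$ is the minimum of $|S|$ over $S\subseteq X\setminus\{x\}$ with $(\mathrm D_xf)(\mathbf u^{\oplus S})=1$ (equivalently $f(\mathbf u^{\oplus S})\ne f(\mathbf u^{\oplus(S\cup\{x\})})$), and $\mathrm{mscs}^{\mathbf u}_g(f)$ is the minimum of $|S|$ over $S\subseteq X$ with $(\mathrm D_gf)(\mathbf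 u^{\oplus S})=1$; each is $\infty$ if no such set exists (with $\infty+k=\infty$). *)

theory Defs
  imports Main "HOL-Library.Extended_Nat"
begin

text \<open>Variables form a finite type 'v (the fixed finite set X); assignments are
  'v \<Rightarrow> bool; Boolean functions are ('v \<Rightarrow> bool) \<Rightarrow> bool.\<close>

type_synonym 'v assignment = "'v \<Rightarrow> bool"
type_synonym 'v bfun = "'v assignment \<Rightarrow> bool"

definition flip :: "'v assignment \<Rightarrow> 'v set \<Rightarrow> 'v assignment" where
  "flip u S = (\<lambda>y. if y \<in> S then \<not> u y else u y)"

definition restr :: "'v bfun \<Rightarrow> 'v \<Rightarrow> bool \<Rightarrow> 'v bfun" where
  "restr f x c = (\<lambda>u. f (u(x := c)))"

definition dep :: "'v bfun \<Rightarrow> 'v set" where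
  "dep f = {x. restr f x True \<noteq> restr f x False}"

definition subst :: "'v bfun \<Rightarrow> 'v \<Rightarrow> 'v bfun \<Rightarrow> 'v bfun" where
  "subst f x s = (\<lambda>u. (s u \<and> restr f x True u) \<or> (\<not> s u \<and> restr f x False u))"

definition deriv_var :: "'v bfun \<Rightarrow> 'v \<Rightarrow> 'v bfun" where
  "deriv_var f x = (\<lambda>u. restr f x True u \<noteq> restr f x False u)"

definition is_const :: "'v bfun \<Rightarrow> bool" where
  "is_const g \<longleftrightarrow> (\<exists>c. \<forall>u. g u = c)"

definition modular :: "'v bfun \<Rightarrow> 'v bfun \<Rightarrow> bool" where
  "modular f g \<longleftrightarrow> \<not> is_const g \<and>
     (\<exists>l z. dep l \<inter> dep g = {} \<and> f = subst l z g)"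

text \<open>f_{g/c} := l_{z/c} for any decomposition f = l[z/g] (well defined per the paper).\<close>
definition restr_fun :: "'v bfun \<Rightarrow> 'v bfun \<Rightarrow> bool \<Rightarrow> 'v bfun" where
  "restr_fun f g c = (THE h. \<exists>l z. dep l \<inter> dep g = {} \<and> f = subst l z g \<and> h = restr l z c)"

definition deriv_fun :: "'v bfun \<Rightarrow> 'v bfun \<Rightarrow> 'v bfun" where
  "deriv_fun f g = (\<lambda>u. restr_fun f g True u \<noteq> restr_fun f g False u)"

definition mscs_var :: "'v assignment \<Rightarrow> 'v \<Rightarrow> 'v bfun \<Rightarrow> enat" where
  "mscs_var u x f = Inf {enat (card S) | S. S \<subseteq> UNIV - {x} \<and> deriv_var f x (flip u S)}"

definition mscs_fun :: "'v assignment \<Rightarrow> 'v bfun \<Rightarrow> 'v bfun \<Rightarrow> enat" where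
  "mscs_fun u g f = Inf {enat (card S) | S. deriv_fun f g (flip u S)}"

end

theory Submission
  imports Defs
begin

text \<open>Write \<open>f = l[z/g]\<close> with \<open>dep l \<inter> dep g = {}\<close>. Since \<open>x \<in> dep g\<close> does not occur
  in \<open>l\<close>, flipping \<open>x\<close> changes \<open>f\<close> exactly when it changes \<open>g\<close> and \<open>l_{z/1} \<noteq> l_{z/0}\<close>, i.e.
  \<open>D\<^sub>x f = D\<^sub>x g \<and> D\<^sub>g f\<close>. The first conjunct only sees the variables of \<open>g\<close>, the second
  only those outside \<open>g\<close>, so a minimal flip set for \<open>D\<^sub>x f\<close> is the disjoint union of a
  minimal one for \<open>D\<^sub>x g\<close> and a minimal one for \<open>D\<^sub>g f\<close>.\<close>

lemma fun_upd_notin_dep: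
  assumes "y \<notin> dep h"
  shows "h (w(y := c)) = h w"
proof -
  have "restr h y True = restr h y False" using assms unfolding dep_def by simp
  then have "h (w(y := True)) = h (w(y := False))" unfolding restr_def by metis
  then show ?thesis
    by (cases c; cases "w y") (auto simp: fun_upd_idem)
qed

lemma eq_if_eq_on_dep_finite_diff:
  assumes "finite {y. u y \<noteq> v y}" and "\<forall>y\<in>dep h. u y = v y"
  shows "h u = h v"
proof -
  have "{y. u y \<noteq> v y} \<subseteq> F \<Longrightarrow> \<forall>y\<in>dep h. u y = v y \<Longrightarrow> h u = h v" if "finite F" for F
    using that
  proof (induction F arbitrary: u rule: finite_induct)
    case empty
    then have "u = v" by (auto simp: fun_eq_iff)
    then show ?case by simp
  next
    case (insert a F)
    have "h (u(a := v a)) = h v"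
      by (rule insert.IH) (use insert.prems in auto)
    moreover have "h (u(a := v a)) = h u"
      using insert.prems(2) fun_upd_notin_dep[of a h u "v a"]
      by (cases "a \<in> dep h") (simp_all add: fun_upd_idem)
    ultimately show ?case by simp
  qed
  with assms show ?thesis by blast
qed

lemma eq_if_eq_on_dep:
  fixes h :: "('v::finite) bfun"
  assumes "\<forall>y\<in>dep h. u y = v y"
  shows "h u = h v"
  by (rule eq_if_eq_on_dep_finite_diff[OF _ assms]) simp

lemma dep_restr_subset: "dep (restr l z c) \<subseteq> dep l"
proof
  fix y assume y: "y \<in> dep (restr l z c)"
  show "y \<in> dep l"
  proof (rule ccontr)
    assume "y \<notin> dep l"
    have "restr (restr l z c) y b = restr l z c" for b
    proof (cases "y = z")
      case False
      then have "w(y := b, z := c) = w(z := c, y := b)" for w by (rule fun_upd_twist)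
      then show ?thesis using \<open>y \<notin> dep l\<close> by (simp add: restr_def fun_upd_notin_dep)
    qed (simp add: restr_def)
    then show False using y unfolding dep_def by simp
  qed
qed

lemma dep_combine_subset: "dep (\<lambda>w. F (h1 w) (h2 w)) \<subseteq> dep h1 \<union> dep h2"
proof
  fix y assume y: "y \<in> dep (\<lambda>w. F (h1 w) (h2 w))"
  show "y \<in> dep h1 \<union> dep h2"
  proof (rule ccontr)
    assume "y \<notin> dep h1 \<union> dep h2"
    then have "restr (\<lambda>w. F (h1 w) (h2 w)) y b = (\<lambda>w. F (h1 w) (h2 w))" for b
      by (simp add: restr_def fun_upd_notin_dep)
    then show False using y unfolding dep_def by simp
  qed
qed

lemma dep_deriv_var_subset: "dep (deriv_var g x) \<subseteq> dep g"
  using dep_combine_subset[of "(\<noteq>)" "restr g x True" "restr g x False"]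
    dep_restr_subset[of g x]
  unfolding deriv_var_def by blast

lemma flip_Int_if_dep_subset:
  fixes h :: "('v::finite) bfun"
  assumes "dep h \<subseteq> D"
  shows "h (flip u S) = h (flip u (S \<inter> D))"
  by (rule eq_if_eq_on_dep[of h]) (use assms in \<open>auto simp: flip_def\<close>)

lemma restr_subst_unique:
  fixes g l l' :: "('v::finite) bfun"
  assumes "\<not> is_const g" and "dep l \<inter> dep g = {}" and "dep l' \<inter> dep g = {}"
    and "subst l z g = subst l' z' g"
  shows "restr l z c = restr l' z' c"
proof
  fix w
  obtain a where ga: "g a = c"
    using assms(1) unfolding is_const_def by (metis (full_types))
  \<comment> \<open>Take the variables of \<open>g\<close> from \<open>a\<close> and the others from \<open>w\<close>: then \<open>g\<close> selects the
    branch \<open>c\<close>, while neither branch notices the change.\<close>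
  define w' where "w' = (\<lambda>y. if y \<in> dep g then a y else w y)"
  have "g w' = c"
    using ga eq_if_eq_on_dep[of g w' a] by (simp add: w'_def)
  then have "restr l z c w' = restr l' z' c w'"
    using fun_cong[OF assms(4), of w'] by (cases c) (simp_all add: subst_def)
  moreover have "restr k y c w' = restr k y c w" if "dep k \<inter> dep g = {}" for k y
    by (rule eq_if_eq_on_dep[of "restr k y c"])
      (use that dep_restr_subset[of k y c] in \<open>auto simp: w'_def\<close>)
  ultimately show "restr l z c w = restr l' z' c w"
    using assms(2,3) by simp
qed

lemma restr_fun_subst:
  fixes g l :: "('v::finite) bfun"
  assumes "\<not> is_const g" and "dep l \<inter> dep g = {}"
  shows "restr_fun (subst l z g) g c = restr l z c"
  unfolding restr_fun_def
proof (rule the_equality)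
  show "\<exists>l' z'. dep l' \<inter> dep g = {} \<and> subst l z g = subst l' z' g \<and> restr l z c = restr l' z' c"
    using assms(2) by blast
next
  fix h assume "\<exists>l' z'. dep l' \<inter> dep g = {} \<and> subst l z g = subst l' z' g \<and> h = restr l' z' c"
  then obtain l' z' where "dep l' \<inter> dep g = {}" "subst l z g = subst l' z' g" "h = restr l' z' c"
    by blast
  then show "h = restr l z c"
    using restr_subst_unique[OF assms] by simp
qed

lemma deriv_fun_subst:
  fixes g l :: "('v::finite) bfun"
  assumes "\<not> is_const g" and "dep l \<inter> dep g = {}"
  shows "deriv_fun (subst l z g) g = (\<lambda>w. restr l z True w \<noteq> restr l z False w)"
  unfolding deriv_fun_def restr_fun_subst[OF assms] ..

lemma deriv_var_subst:
  assumes "x \<notin> dep l"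
  shows "deriv_var (subst l z g) x w
    \<longleftrightarrow> deriv_var g x w \<and> restr l z True w \<noteq> restr l z False w"
proof -
  have "x \<notin> dep (restr l z c)" for c
    using assms dep_restr_subset[of l z c] by blast
  then have "restr (subst l z g) x b w
      \<longleftrightarrow> g (w(x := b)) \<and> restr l z True w \<or> \<not> g (w(x := b)) \<and> restr l z False w" for b
    unfolding restr_def[of "subst l z g"] by (simp add: subst_def fun_upd_notin_dep)
  then show ?thesis
    unfolding deriv_var_def restr_def[of g] by auto
qed

lemma Inf_enat_in: "(A::enat set) \<noteq> {} \<Longrightarrow> Inf A \<in> A"
  unfolding Inf_enat_def by (auto intro: LeastI_ex)

lemma Inf_card_split:
  fixes P Q :: "('v::finite) set \<Rightarrow> bool"
  assumes "x \<in> G" and P: "\<And>S. P S = P (S \<inter> G)" and Q: "\<And>S. Q S = Q (S - G)"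
  shows "Inf {enat (card S) | S. S \<subseteq> UNIV - {x} \<and> P S \<and> Q S}
       = Inf {enat (card S) | S. S \<subseteq> UNIV - {x} \<and> P S} + Inf {enat (card S) | S. Q S}"
    (is "Inf ?A = Inf ?B + Inf ?C")
proof (cases "?B \<noteq> {} \<and> ?C \<noteq> {}")
  case True
  obtain S1 where S1: "S1 \<subseteq> UNIV - {x}" "P S1" "Inf ?B = enat (card S1)"
    using Inf_enat_in[of ?B] True by auto
  obtain S2 where S2: "Q S2" "Inf ?C = enat (card S2)"
    using Inf_enat_in[of ?C] True by auto
  define T where "T = S1 \<inter> G \<union> (S2 - G)"
  have "T \<inter> G = S1 \<inter> G" "T - G = S2 - G" by (auto simp: T_def)
  then have "T \<in> {S. S \<subseteq> UNIV - {x} \<and> P S \<and> Q S}"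
    using P[of T] P[of S1] Q[of T] Q[of S2] S1 S2 assms(1) by (auto simp: T_def)
  then have "Inf ?A \<le> enat (card T)" by (blast intro: Inf_lower)
  also have "card T \<le> card S1 + card S2"
    unfolding T_def by (rule order_trans[OF card_Un_le add_mono]) (auto intro: card_mono)
  then have "enat (card T) \<le> Inf ?B + Inf ?C" using S1 S2 by simp
  finally have "Inf ?A \<le> Inf ?B + Inf ?C" .
  moreover have "Inf ?B + Inf ?C \<le> Inf ?A"
  proof (rule Inf_greatest)
    fix m assume "m \<in> ?A"
    then obtain S where S: "S \<subseteq> UNIV - {x}" "P S" "Q S" "m = enat (card S)" by auto
    have "Inf ?B \<le> enat (card (S \<inter> G))"
      by (rule Inf_lower) (use S P[of S] in auto)
    moreover have "Inf ?C \<le> enat (card (S - G))"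
      by (rule Inf_lower) (use S Q[of S] in auto)
    moreover have "card S = card (S \<inter> G) + card (S - G)"
      by (metis card_Int_Diff finite)
    ultimately show "Inf ?B + Inf ?C \<le> m" using S(4) add_mono by fastforce
  qed
  ultimately show ?thesis by simp
next
  case False
  then have "?A = {}" by auto
  with False show ?thesis by (auto simp: Inf_enat_def)
qed

theorem mainTheorem19:
  fixes f g :: "('v::finite) bfun" and u :: "'v assignment" and x :: 'v
  assumes "modular f g"
    and "x \<in> dep g"
  shows "mscs_var u x f = mscs_var u x g + mscs_fun u g f"
proof -
  obtain l z where nc: "\<not> is_const g" and ld: "dep l \<inter> dep g = {}" and f: "f = subst l z g"
    using assms(1) unfolding modular_def by blast
  define D where "D = (\<lambda>w. restr l z True w \<noteq> restr l z False w)"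
  have "dep D \<subseteq> - dep g"
    using dep_combine_subset[of "(\<noteq>)" "restr l z True" "restr l z False"]
      dep_restr_subset[of l z] ld unfolding D_def by blast
  then have D_flip: "D (flip u S) = D (flip u (S - dep g))" for S
    unfolding Diff_eq by (rule flip_Int_if_dep_subset)
  have g_flip: "deriv_var g x (flip u S) = deriv_var g x (flip u (S \<inter> dep g))" for S
    by (rule flip_Int_if_dep_subset[OF dep_deriv_var_subset])
  have "x \<notin> dep l" using ld assms(2) by blast
  then have "deriv_var f x w \<longleftrightarrow> deriv_var g x w \<and> D w" for w
    unfolding f D_def by (rule deriv_var_subst)
  moreover have "deriv_fun f g = D"
    unfolding f D_def by (rule deriv_fun_subst[OF nc ld])
  ultimately show ?thesis
    unfolding mscs_var_def mscs_fun_def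
    using Inf_card_split[OF assms(2), of "\<lambda>S. deriv_var g x (flip u S)" "\<lambda>S. D (flip u S)"]
      g_flip D_flip by simp
qed

end
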